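(* Let $(G,v)$ and $(G',v')$ be valued abelian groups and $f:G\to G'$ a map with $f0=0$. If $f$ is immediate, then for every $a'\in G'\setminus\{0\}$ there is $a\in G$ such that (IH1) $v'(a'-fa)>v'a'$, and (IH2) for all $b\in G$, $va\le vb$ implies $v'fa\le v'fb$. Conversely, if $f$ is a group homomorphism and for every $a'\in G'\setminus\{0\}$ there is $a\in G$ satisfying (IH1) and (IH2), then $f$ is immediate.
   Context: A valued abelian group $(G,v)$ is an abelian group with a map $v$ from $G$ onto $vG\cup\{\infty\}$, $vG$ totally ordered and $\infty$ larger than all its elements, such that $va=\infty$ iff $a=0$ and $v(a-b)\ge\min\{va,vb\}$. It is regarded as an ultrametric space with $u(a,b)=v(a-b)$. For a map $f:Y\to Y'$ of ultrametric spaces, with closed balls $B(x,y)=\{z:u(x,z)\ge u(x,y)\}$, an element $z'\in Y'$ is an attractor for $f$ if for every $y\in Y$ with $z'\neq fy$ there is $z\in Y$ with $u'(fz,z')>u'(fy,z')$ and $f(B(y,z))\subseteq B(fy,z')$; $f$ is immediate if every $z'\in Y'$ is an attractor for $f$. *)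

theory Defs
  imports Main
begin

text \<open>A valued abelian group: the group is a type of class ab_group_add, the valuation
  takes values in a linear order whose top element plays the role of infinity;
  the value set vG is the image of the nonzero elements.\<close>

definition valued_group :: "('a::ab_group_add \<Rightarrow> 'b::{linorder,order_top}) \<Rightarrow> bool" where
  "valued_group v \<longleftrightarrow> (\<forall>a. v a = top \<longleftrightarrow> a = 0) \<and> (\<forall>a b. min (v a) (v b) \<le> v (a - b))"

definition vdist :: "('a::ab_group_add \<Rightarrow> 'b) \<Rightarrow> 'a \<Rightarrow> 'a \<Rightarrow> 'b" where
  "vdist v a b = v (a - b)"

definition uball :: "('a \<Rightarrow> 'a \<Rightarrow> 'b::linorder) \<Rightarrow> 'a \<Rightarrow> 'a \<Rightarrow> 'a set" where
  "uball u x y = {z. u x y \<le> u x z}"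

definition attractor ::
  "('a \<Rightarrow> 'a \<Rightarrow> 'b::linorder) \<Rightarrow> ('c \<Rightarrow> 'c \<Rightarrow> 'd::linorder) \<Rightarrow> ('a \<Rightarrow> 'c) \<Rightarrow> 'c \<Rightarrow> bool" where
  "attractor u u' f z' \<longleftrightarrow>
     (\<forall>y. z' \<noteq> f y \<longrightarrow>
        (\<exists>z. u' (f y) z' < u' (f z) z' \<and> f ` uball u y z \<subseteq> uball u' (f y) z'))"

definition immediate ::
  "('a \<Rightarrow> 'a \<Rightarrow> 'b::linorder) \<Rightarrow> ('c \<Rightarrow> 'c \<Rightarrow> 'd::linorder) \<Rightarrow> ('a \<Rightarrow> 'c) \<Rightarrow> bool" where
  "immediate u u' f \<longleftrightarrow> (\<forall>z'. attractor u u' f z')"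

end

theory Submission
  imports Defs "HOL.Modules"
begin

text \<open>Apply the attractor property of a' at the point 0: it yields z with fz strictly
  closer to a' than 0 is, so v'(fz) = v'a', and f maps the ball of radius vz around 0 into
  the ball of radius v'a' around 0; thus z satisfies (IH1) and (IH2). Conversely, for
  additive f an approximant a of z' - fy, translated to y + a, witnesses that z' is an
  attractor at y, since additivity carries balls around y to balls around fy.\<close>

definition approximates ::
  "('a::ab_group_add \<Rightarrow> 'b::linorder) \<Rightarrow> ('c::ab_group_add \<Rightarrow> 'd::linorder) \<Rightarrow> ('a \<Rightarrow> 'c) \<Rightarrow> 'c \<Rightarrow> 'a \<Rightarrow> bool"
  where "approximates v v' f a' a \<longleftrightarrow>
    v' a' < v' (a' - f a) \<and> (\<forall>b. v a \<le> v b \<longrightarrow> v' (f a) \<le> v' (f b))"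

lemma valued_group_zero: "valued_group v \<Longrightarrow> v 0 = top"
  unfolding valued_group_def by blast

lemma valued_group_minus:
  assumes "valued_group v" shows "v (- x) = v x"
proof -
  have le: "v x \<le> v (- x)" for x
  proof -
    have "min (v 0) (v x) \<le> v (0 - x)" using assms unfolding valued_group_def by blast
    then show ?thesis using valued_group_zero[OF assms] by simp
  qed
  show ?thesis using le[of x] le[of "- x"] by simp
qed

lemma valued_group_diff_commute:
  assumes "valued_group v" shows "v (a - b) = v (b - a)"
  using valued_group_minus[OF assms, of "a - b"] by simp

lemma valued_group_add:
  assumes "valued_group v" shows "min (v a) (v b) \<le> v (a + b)"
proof -
  have "min (v a) (v (- b)) \<le> v (a - - b)" using assms unfolding valued_group_def by blast
  then show ?thesis using valued_group_minus[OF assms, of b] by simp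
qed

text \<open>The ultrametric principle that every triangle is isosceles.\<close>
lemma valued_group_eq_if_less_diff:
  assumes "valued_group v" and "v a < v (a - c)" shows "v c = v a"
proof -
  have "min (v a) (v (a - c)) \<le> v (a - (a - c))"
    using assms(1) unfolding valued_group_def by blast
  hence "v a \<le> v c" using assms(2) by simp
  moreover have "min (v c) (v (a - c)) \<le> v a"
    using valued_group_add[OF assms(1), of c "a - c"] by simp
  ultimately show ?thesis using assms(2) by (auto simp: min_def split: if_splits)
qed

lemma mem_uball_vdist:
  assumes "valued_group v"
  shows "z \<in> uball (vdist v) x y \<longleftrightarrow> v (y - x) \<le> v (z - x)"
  unfolding uball_def vdist_def using valued_group_diff_commute[OF assms] by simp

lemma approximant_if_attractor:
  assumes v: "valued_group v" and v': "valued_group v'" and "f 0 = 0"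
    and "attractor (vdist v) (vdist v') f a'" and "a' \<noteq> 0"
  shows "\<exists>a. approximates v v' f a' a"
proof -
  obtain z where closer: "vdist v' (f 0) a' < vdist v' (f z) a'"
    and ball: "f ` uball (vdist v) 0 z \<subseteq> uball (vdist v') (f 0) a'"
    using assms(4,5) \<open>f 0 = 0\<close> unfolding attractor_def by metis
  have IH1: "v' a' < v' (a' - f z)"
    using closer \<open>f 0 = 0\<close> valued_group_diff_commute[OF v', of a' "f z"]
      valued_group_minus[OF v', of a'] by (simp add: vdist_def)
  have "v' (f z) \<le> v' (f b)" if "v z \<le> v b" for b
  proof -
    have "b \<in> uball (vdist v) 0 z" using that mem_uball_vdist[OF v] by simp
    hence "v' a' \<le> v' (f b)" using ball \<open>f 0 = 0\<close> mem_uball_vdist[OF v'] by auto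
    thus ?thesis using valued_group_eq_if_less_diff[OF v' IH1] by simp
  qed
  with IH1 show ?thesis unfolding approximates_def by blast
qed

lemma attractor_if_approximants:
  assumes v: "valued_group v" and v': "valued_group v'" and f: "additive f"
    and approx: "\<forall>a'. a' \<noteq> 0 \<longrightarrow> (\<exists>a. approximates v v' f a' a)"
  shows "attractor (vdist v) (vdist v') f z'"
  unfolding attractor_def
proof (intro allI impI)
  fix y assume "z' \<noteq> f y"
  then obtain a where IH1: "v' (z' - f y) < v' (z' - f y - f a)"
    and IH2: "\<forall>b. v a \<le> v b \<longrightarrow> v' (f a) \<le> v' (f b)"
    using approx[rule_format, of "z' - f y"] \<open>z' \<noteq> f y\<close> unfolding approximates_def by auto
  have fa: "v' (f a) = v' (z' - f y)" using valued_group_eq_if_less_diff[OF v' IH1] .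
  show "\<exists>z. vdist v' (f y) z' < vdist v' (f z) z' \<and>
            f ` uball (vdist v) y z \<subseteq> uball (vdist v') (f y) z'"
  proof (intro exI conjI)
    show "vdist v' (f y) z' < vdist v' (f (y + a)) z'"
      using IH1 additive.add[OF f, of y a] valued_group_diff_commute[OF v']
      by (simp add: vdist_def algebra_simps)
    show "f ` uball (vdist v) y (y + a) \<subseteq> uball (vdist v') (f y) z'"
    proof clarify
      fix w assume "w \<in> uball (vdist v) y (y + a)"
      hence "v a \<le> v (w - y)" using mem_uball_vdist[OF v] by simp
      hence "v' (f a) \<le> v' (f (w - y))" using IH2 by blast
      hence "v' (z' - f y) \<le> v' (f w - f y)" using fa additive.diff[OF f] by simp
      thus "f w \<in> uball (vdist v') (f y) z'" using mem_uball_vdist[OF v'] by simp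
    qed
  qed
qed

theorem proposition11:
  fixes v :: "'a::ab_group_add \<Rightarrow> 'b::{linorder,order_top}"
    and v' :: "'c::ab_group_add \<Rightarrow> 'd::{linorder,order_top}"
    and f :: "'a \<Rightarrow> 'c"
  assumes "valued_group v" and "valued_group v'" and "f 0 = 0"
  shows "(immediate (vdist v) (vdist v') f \<longrightarrow>
            (\<forall>a'. a' \<noteq> 0 \<longrightarrow> (\<exists>a. v' (a' - f a) > v' a' \<and>
                 (\<forall>b. v a \<le> v b \<longrightarrow> v' (f a) \<le> v' (f b)))))
       \<and> (((\<forall>x y. f (x + y) = f x + f y) \<and>
            (\<forall>a'. a' \<noteq> 0 \<longrightarrow> (\<exists>a. v' (a' - f a) > v' a' \<and>
                 (\<forall>b. v a \<le> v b \<longrightarrow> v' (f a) \<le> v' (f b)))))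
           \<longrightarrow> immediate (vdist v) (vdist v') f)"
proof (intro conjI impI)
  assume "immediate (vdist v) (vdist v') f"
  then show "\<forall>a'. a' \<noteq> 0 \<longrightarrow> (\<exists>a. v' (a' - f a) > v' a' \<and>
                 (\<forall>b. v a \<le> v b \<longrightarrow> v' (f a) \<le> v' (f b)))"
    using approximant_if_attractor[of v v' f] assms
    unfolding immediate_def approximates_def by blast
next
  assume "(\<forall>x y. f (x + y) = f x + f y) \<and>
            (\<forall>a'. a' \<noteq> 0 \<longrightarrow> (\<exists>a. v' (a' - f a) > v' a' \<and>
                 (\<forall>b. v a \<le> v b \<longrightarrow> v' (f a) \<le> v' (f b))))"
  then have "additive f" and "\<forall>a'. a' \<noteq> 0 \<longrightarrow> (\<exists>a. approximates v v' f a' a)"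
    unfolding additive_def approximates_def by blast+
  then show "immediate (vdist v) (vdist v') f"
    using attractor_if_approximants[OF assms(1,2)] unfolding immediate_def by blast
qed

end
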